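(* Let $A\subseteq\omega$ be an AP-set and let $f:\omega\to\omega$ be any function. Then there exists an AP-set $C\subseteq A$ such that either (1) $|f[C]|=1$, or (2) $f$ is finite-to-one on $C$, and if $\langle x_n\rangle_{n=0}^\infty$ enumerates $f[C]$ in increasing order, then $\lim_{n\to\infty}(x_{n+1}-x_n)=\infty$. In particular, in either case $f[C]$ is not an IP-set.
   Context: $\omega=\{0,1,2,\dots\}$. A set $A\subseteq\omega$ is an AP-set if it contains arithmetic progressions of every finite length. For $B\subseteq\omega$, $FS(B)$ denotes the set of all sums $\sum_{n\in F}n$ over nonempty finite subsets $F\subseteq B$. A set $A\subseteq\omega$ is an IP-set if there is an infinite $B\subseteq\omega$ with $FS(B)\subseteq A$. *)

theory Defs
  imports Main "HOL-Library.Infinite_Set"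
begin

definition AP_set :: "nat set \<Rightarrow> bool" where
  "AP_set A \<longleftrightarrow> (\<forall>k. \<exists>a d. d > 0 \<and> (\<forall>i<k. a + i * d \<in> A))"

definition FS :: "nat set \<Rightarrow> nat set" where
  "FS B = {\<Sum>F | F. F \<subseteq> B \<and> finite F \<and> F \<noteq> {}}"

definition IP_set :: "nat set \<Rightarrow> bool" where
  "IP_set A \<longleftrightarrow> (\<exists>B. infinite B \<and> FS B \<subseteq> A)"

definition finite_to_one_on :: "(nat \<Rightarrow> nat) \<Rightarrow> nat set \<Rightarrow> bool" where
  "finite_to_one_on f C \<longleftrightarrow> (\<forall>y. finite {x \<in> C. f x = y})"

end

(*
  If some fibre of f inside A is an AP-set, it is the required C. Otherwise, colour A by the
  value of f up to a threshold M and by the residue of f modulo m above it. By van der Waerden's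
  theorem (colour-focusing proof) AP-sets are partition regular, and no class of a value up to M
  can be an AP-set, so A contains arbitrarily long progressions on which f exceeds M and is
  constant modulo m. Choosing for every k a k-term progression on which f is constant modulo k + 1
  and lies above all values taken on the earlier ones gives an AP-set C whose image has gaps
  tending to infinity. Such a sparse set is not an IP-set: for a fixed b > 0 in B and large x in B,
  both x and x + b would lie in FS(B).
*)

theory Submission
  imports Defs "HOL-Library.Countable"
begin

section \<open>Van der Waerden's theorem\<close>

definition mono_AP :: "(nat \<Rightarrow> nat) \<Rightarrow> nat \<Rightarrow> nat \<Rightarrow> bool" where
  "mono_AP c L N \<longleftrightarrow> (\<exists>a d. 0 < d \<and> (\<forall>j<L. a + j * d < N \<and> c (a + j * d) = c a))"

definition forces_mono_AP :: "nat set \<Rightarrow> nat \<Rightarrow> nat \<Rightarrow> bool" where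
  "forces_mono_AP R L N \<longleftrightarrow> (\<forall>c. c ` {..<N} \<subseteq> R \<longrightarrow> mono_AP c L N)"

definition focused ::
    "(nat \<Rightarrow> nat) \<Rightarrow> nat \<Rightarrow> nat \<Rightarrow> nat \<Rightarrow> (nat \<Rightarrow> nat) \<Rightarrow> (nat \<Rightarrow> nat) \<Rightarrow> bool" where
  "focused c k s f a d \<longleftrightarrow> inj_on (\<lambda>i. c (a i)) {..<s} \<and>
     (\<forall>i<s. 0 < d i \<and> a i + k * d i = f \<and> (\<forall>j<k. c (a i + j * d i) = c (a i)))"

lemma mono_AP_shift:
  assumes "mono_AP (\<lambda>x. c (t + x)) L n" and "t + n \<le> N"
  shows "mono_AP c L N"
proof -
  obtain a d where "0 < d" and "\<forall>j<L. a + j * d < n \<and> c (t + (a + j * d)) = c (t + a)"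
    using assms(1) unfolding mono_AP_def by blast
  then show ?thesis
    unfolding mono_AP_def using assms(2) by (intro exI[of _ "t + a"] exI[of _ d]) (auto simp: add.assoc)
qed

lemma focused_mono_AP:
  assumes foc: "focused c k s f a d" and "i < s" and "c f = c (a i)" and "f < N"
  shows "mono_AP c (Suc k) N"
  unfolding mono_AP_def
proof (intro exI conjI allI impI)
  have ap: "0 < d i" "a i + k * d i = f" "\<forall>j<k. c (a i + j * d i) = c (a i)"
    using foc \<open>i < s\<close> unfolding focused_def by auto
  then show "0 < d i" by simp
  fix j assume "j < Suc k"
  then have "j * d i \<le> k * d i" by simp
  then show "a i + j * d i < N" using ap(2) \<open>f < N\<close> by linarith
  show "c (a i + j * d i) = c (a i)"
    using ap \<open>j < Suc k\<close> \<open>c f = c (a i)\<close> by (cases "j = k") auto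
qed

lemma focused_full_palette:
  assumes foc: "focused c k (card R) f a d" and "finite R" and "c ` {..f} \<subseteq> R"
  shows "\<exists>i<card R. c f = c (a i)"
proof -
  have "a i \<le> f" if "i < card R" for i
    using foc that unfolding focused_def by (metis le_add1)
  then have "(\<lambda>i. c (a i)) ` {..<card R} \<subseteq> R" using assms(3) by auto
  moreover have "card ((\<lambda>i. c (a i)) ` {..<card R}) = card R"
    using foc unfolding focused_def by (simp add: card_image)
  ultimately have "(\<lambda>i. c (a i)) ` {..<card R} = R" using \<open>finite R\<close> by (simp add: card_subset_eq)
  moreover have "c f \<in> R" using assms(3) by auto
  ultimately show ?thesis by auto
qed

lemma focused_lift:
  assumes foc: "focused (\<lambda>x. c (t + x)) k s f a d" and "f < n" and "0 < D"
    and rep: "\<forall>j<k. \<forall>x<n. c (t + j * D + x) = c (t + x)"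
    and fresh: "\<forall>i<s. c (t + f) \<noteq> c (t + a i)"
  shows "focused c k (Suc s) (t + f + k * D)
           (\<lambda>i. if i < s then t + a i else t + f) (\<lambda>i. if i < s then d i + D else D)"
proof -
  have ap: "0 < d i" "a i + k * d i = f" "\<forall>j<k. c (t + (a i + j * d i)) = c (t + a i)"
    if "i < s" for i
    using foc that unfolding focused_def by auto
  have old: "c (t + a i + j * (d i + D)) = c (t + a i)" if "i < s" "j < k" for i j
  proof -
    have "a i + j * d i < n"
      using ap(2)[OF \<open>i < s\<close>] \<open>f < n\<close> \<open>j < k\<close> mult_le_mono1[of j k "d i"] by linarith
    then have "c (t + j * D + (a i + j * d i)) = c (t + (a i + j * d i))"
      using rep \<open>j < k\<close> by blast
    then show ?thesis using ap(3)[OF \<open>i < s\<close>] \<open>j < k\<close> by (simp add: algebra_simps)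
  qed
  have new: "c (t + f + j * D) = c (t + f)" if "j < k" for j
    using rep \<open>j < k\<close> \<open>f < n\<close> by (metis add.commute add.left_commute)
  have "inj_on (\<lambda>i. c (if i < s then t + a i else t + f)) (insert s {..<s})"
    using foc fresh unfolding focused_def by (auto simp: inj_on_def)
  moreover have "insert s {..<s} = {..<Suc s}" by auto
  ultimately show ?thesis
    unfolding focused_def using ap(1,2) old new \<open>0 < D\<close> by (auto simp: algebra_simps)
qed

lemma repeated_blocks:
  fixes R :: "nat set"
  assumes vdW: "\<And>R'. finite R' \<Longrightarrow> \<exists>M. forces_mono_AP R' k M" and "1 \<le> k" and "finite R"
  shows "\<exists>M. \<forall>c. c ` {..<2 * M * n} \<subseteq> R \<longrightarrow>
           (\<exists>b e. 0 < e \<and> b + k * e < 2 * M \<and>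
              (\<forall>j<k. \<forall>x<n. c (b * n + j * (e * n) + x) = c (b * n + x)))"
proof -
  define words :: "nat list set" where "words = {xs. set xs \<subseteq> R \<and> length xs = n}"
  have "finite words" unfolding words_def using \<open>finite R\<close> by (rule finite_lists_length_eq)
  then obtain M where M: "forces_mono_AP (to_nat ` words) k M" using vdW by blast
  have "\<exists>b e. 0 < e \<and> b + k * e < 2 * M \<and> (\<forall>j<k. \<forall>x<n. c (b * n + j * (e * n) + x) = c (b * n + x))"
    if c: "c ` {..<2 * M * n} \<subseteq> R" for c
  proof -
    have block_in_range: "t * n + x < 2 * M * n" if "t < M" "x < n" for t x
    proof -
      have "t * n + x < (t + 1) * n" using \<open>x < n\<close> by simp
      also have "\<dots> \<le> 2 * M * n" using \<open>t < M\<close> by (intro mult_right_mono) auto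
      finally show ?thesis .
    qed
    \<comment> \<open>the colour of the \<open>t\<close>-th block of length \<open>n\<close> is its word of colours, coded as a number\<close>
    define block where "block t = to_nat (map (\<lambda>x. c (t * n + x)) [0..<n])" for t
    have "map (\<lambda>x. c (t * n + x)) [0..<n] \<in> words" if "t < M" for t
      unfolding words_def using c block_in_range \<open>t < M\<close> by auto
    then have "block ` {..<M} \<subseteq> to_nat ` words" unfolding block_def by auto
    then obtain b e where "0 < e" and ap: "\<forall>j<k. b + j * e < M \<and> block (b + j * e) = block b"
      using M unfolding forces_mono_AP_def mono_AP_def by blast
    have rep: "c (b * n + j * (e * n) + x) = c (b * n + x)" if "j < k" "x < n" for j x
    proof -
      have "map (\<lambda>x. c ((b + j * e) * n + x)) [0..<n] = map (\<lambda>x. c (b * n + x)) [0..<n]"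
        using ap \<open>j < k\<close> unfolding block_def by simp
      then have "c ((b + j * e) * n + x) = c (b * n + x)" using \<open>x < n\<close> by (simp add: map_eq_conv)
      then show ?thesis by (simp add: algebra_simps)
    qed
    have "b < M" using ap \<open>1 \<le> k\<close> by (metis add_0_right less_le_trans mult_0 zero_less_one)
    show ?thesis
    proof (cases "k = 1")
      \<comment> \<open>a one-term progression says nothing about its difference, so take \<open>e = 1\<close>\<close>
      case True
      have "\<forall>j<k. \<forall>x<n. c (b * n + j * (1 * n) + x) = c (b * n + x)" using True by simp
      moreover have "b + k * 1 < 2 * M" using True \<open>b < M\<close> by simp
      ultimately show ?thesis by blast
    next
      case False
      have "b + (k - 1) * e < M" using ap \<open>1 \<le> k\<close> by simp
      moreover have "e \<le> (k - 1) * e" using False \<open>1 \<le> k\<close> by (simp add: Suc_leI)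
      moreover have "k * e = (k - 1) * e + e" using \<open>1 \<le> k\<close> by (simp add: diff_mult_distrib)
      ultimately have "b + k * e < 2 * M" by linarith
      then show ?thesis using \<open>0 < e\<close> rep by blast
    qed
  qed
  then show ?thesis by blast
qed

lemma colour_focusing:
  fixes R :: "nat set"
  assumes vdW: "\<And>R'. finite R' \<Longrightarrow> \<exists>M. forces_mono_AP R' k M" and "1 \<le> k" and "finite R"
  shows "\<exists>N. \<forall>c. c ` {..<N} \<subseteq> R \<longrightarrow>
           mono_AP c (Suc k) N \<or> (\<exists>f<N. \<exists>a d. focused c k s f a d)"
proof (induction s)
  case 0
  show ?case unfolding focused_def by (intro exI[of _ 1]) auto
next
  case (Suc s)
  then obtain n where n: "\<forall>c. c ` {..<n} \<subseteq> R \<longrightarrow>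
      mono_AP c (Suc k) n \<or> (\<exists>f<n. \<exists>a d. focused c k s f a d)"
    by blast
  obtain M where M: "\<forall>c. c ` {..<2 * M * n} \<subseteq> R \<longrightarrow>
      (\<exists>b e. 0 < e \<and> b + k * e < 2 * M \<and> (\<forall>j<k. \<forall>x<n. c (b * n + j * (e * n) + x) = c (b * n + x)))"
    using repeated_blocks[OF vdW \<open>1 \<le> k\<close> \<open>finite R\<close>] by blast
  have "mono_AP c (Suc k) (2 * M * n) \<or> (\<exists>f<2 * M * n. \<exists>a d. focused c k (Suc s) f a d)"
    if c: "c ` {..<2 * M * n} \<subseteq> R" for c
  proof -
    obtain b e where "0 < e" and bke: "b + k * e < 2 * M"
      and rep: "\<forall>j<k. \<forall>x<n. c (b * n + j * (e * n) + x) = c (b * n + x)"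
      using M c by blast
    have "b * n + n \<le> 2 * M * n"
      using bke mult_le_mono1[of "b + 1" "2 * M" n] by simp
    then have "(\<lambda>x. c (b * n + x)) ` {..<n} \<subseteq> R" using c by auto
    then have "mono_AP (\<lambda>x. c (b * n + x)) (Suc k) n \<or>
        (\<exists>f<n. \<exists>a d. focused (\<lambda>x. c (b * n + x)) k s f a d)"
      using n by blast
    then show ?thesis
    proof (elim disjE exE conjE)
      assume "mono_AP (\<lambda>x. c (b * n + x)) (Suc k) n"
      then show ?thesis using mono_AP_shift \<open>b * n + n \<le> 2 * M * n\<close> by blast
    next
      fix f a d assume "f < n" and foc: "focused (\<lambda>x. c (b * n + x)) k s f a d"
      show ?thesis
      proof (cases "\<exists>i<s. c (b * n + f) = c (b * n + a i)")
        case True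
        then have "mono_AP (\<lambda>x. c (b * n + x)) (Suc k) n"
          using focused_mono_AP[OF foc _ _ \<open>f < n\<close>] by blast
        then show ?thesis using mono_AP_shift \<open>b * n + n \<le> 2 * M * n\<close> by blast
      next
        case False
        have "0 < e * n" using \<open>0 < e\<close> \<open>f < n\<close> by simp
        then have "focused c k (Suc s) (b * n + f + k * (e * n))
            (\<lambda>i. if i < s then b * n + a i else b * n + f) (\<lambda>i. if i < s then d i + e * n else e * n)"
          using focused_lift[OF foc \<open>f < n\<close> _ rep] False by blast
        moreover have "b * n + f + k * (e * n) < 2 * M * n"
        proof -
          have "b * n + f + k * (e * n) < (b + k * e + 1) * n"
            using \<open>f < n\<close> by (simp add: algebra_simps)
          also have "\<dots> \<le> 2 * M * n" using bke by (intro mult_right_mono) auto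
          finally show ?thesis .
        qed
        ultimately show ?thesis by blast
      qed
    qed
  qed
  then show ?case by blast
qed

theorem van_der_Waerden:
  assumes "finite R"
  shows "\<exists>N. forces_mono_AP R L N"
  using assms
proof (induction L arbitrary: R)
  case 0
  show ?case unfolding forces_mono_AP_def mono_AP_def by auto
next
  case (Suc k)
  show ?case
  proof (cases "k = 0")
    case True
    show ?thesis unfolding forces_mono_AP_def mono_AP_def True
      by (intro exI[of _ 1] allI impI exI[of _ 0] exI[of _ "1::nat"]) auto
  next
    case False
    then obtain N where N: "\<forall>c. c ` {..<N} \<subseteq> R \<longrightarrow>
        mono_AP c (Suc k) N \<or> (\<exists>f<N. \<exists>a d. focused c k (card R) f a d)"
      using colour_focusing[OF Suc.IH _ Suc.prems] by fastforce
    have "mono_AP c (Suc k) N" if c: "c ` {..<N} \<subseteq> R" for c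
    proof -
      from N c consider "mono_AP c (Suc k) N" | f a d where "f < N" "focused c k (card R) f a d"
        by blast
      then show ?thesis
      proof cases
        case 2
        moreover from 2 c have "c ` {..f} \<subseteq> R" by auto
        ultimately show ?thesis
          using focused_full_palette[OF _ Suc.prems] focused_mono_AP by metis
      qed
    qed
    then show ?thesis unfolding forces_mono_AP_def by blast
  qed
qed

section \<open>Partition regularity of AP-sets\<close>

definition has_AP :: "nat set \<Rightarrow> nat \<Rightarrow> bool" where
  "has_AP X L \<longleftrightarrow> (\<exists>a d. 0 < d \<and> (\<forall>i<L. a + i * d \<in> X))"

lemma AP_set_iff_has_AP: "AP_set X \<longleftrightarrow> (\<forall>L. has_AP X L)"
  unfolding AP_set_def has_AP_def by blast

lemma has_AP_mono: "has_AP X L \<Longrightarrow> L' \<le> L \<Longrightarrow> X \<subseteq> Y \<Longrightarrow> has_AP Y L'"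
  unfolding has_AP_def by (meson less_le_trans subsetD)

lemma has_AP_nonempty: "has_AP X L \<Longrightarrow> 0 < L \<Longrightarrow> X \<noteq> {}"
  unfolding has_AP_def by auto

lemma has_AP_in_colour_class:
  fixes g :: "nat \<Rightarrow> nat"
  assumes "AP_set A" and "finite R" and "g ` A \<subseteq> R"
  shows "\<exists>v\<in>R. has_AP (A \<inter> g -` {v}) L"
proof -
  obtain N where N: "forces_mono_AP R (Suc L) N" using van_der_Waerden \<open>finite R\<close> by blast
  obtain a d where "0 < d" and ap: "\<forall>i<N. a + i * d \<in> A"
    using \<open>AP_set A\<close> unfolding AP_set_def by blast
  then have "(\<lambda>i. g (a + i * d)) ` {..<N} \<subseteq> R" using assms(3) by auto
  then obtain a' d' where "0 < d'"
    and mono: "\<forall>j<Suc L. a' + j * d' < N \<and> g (a + (a' + j * d') * d) = g (a + a' * d)"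
    using N unfolding forces_mono_AP_def mono_AP_def by blast
  have "a + a' * d + i * (d' * d) \<in> A \<inter> g -` {g (a + a' * d)}" if "i < L" for i
  proof -
    have "a + a' * d + i * (d' * d) = a + (a' + i * d') * d" by (simp add: algebra_simps)
    then show ?thesis using mono ap \<open>i < L\<close> by (metis IntI less_SucI vimage_singleton_eq)
  qed
  then have "has_AP (A \<inter> g -` {g (a + a' * d)}) L"
    unfolding has_AP_def using \<open>0 < d\<close> \<open>0 < d'\<close> by (metis nat_0_less_mult_iff)
  moreover have "g (a + a' * d) \<in> R" using mono ap assms(3) by (metis add_0 image_subset_iff mult_0 zero_less_Suc)
  ultimately show ?thesis by blast
qed

lemma AP_set_colour_class:
  fixes g :: "nat \<Rightarrow> nat"
  assumes "AP_set A" and "finite R" and "g ` A \<subseteq> R"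
  shows "\<exists>v\<in>R. AP_set (A \<inter> g -` {v})"
proof (rule ccontr)
  assume "\<not> ?thesis"
  then obtain len where len: "\<forall>v\<in>R. \<not> has_AP (A \<inter> g -` {v}) (len v)"
    unfolding AP_set_iff_has_AP by metis
  obtain v where "v \<in> R" and "has_AP (A \<inter> g -` {v}) (Max (len ` R))"
    using has_AP_in_colour_class[OF assms] by blast
  moreover have "len v \<le> Max (len ` R)" using \<open>finite R\<close> \<open>v \<in> R\<close> by simp
  ultimately show False using len has_AP_mono by blast
qed

lemma AP_above_in_residue_class:
  fixes f :: "nat \<Rightarrow> nat"
  assumes "AP_set A" and no_fibre: "\<And>v. \<not> AP_set (A \<inter> f -` {v})" and "0 < m"
  shows "\<exists>B\<subseteq>A. finite B \<and> has_AP B L \<and> (\<forall>x\<in>B. M < f x) \<and>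
           (\<forall>x\<in>B. \<forall>y\<in>B. f x mod m = f y mod m)"
proof -
  define h where "h x = (if f x \<le> M then f x else M + 1 + f x mod m)" for x
  have "h ` A \<subseteq> {..<M + 1 + m}" unfolding h_def using \<open>0 < m\<close> by auto
  then obtain v where v: "AP_set (A \<inter> h -` {v})"
    using AP_set_colour_class[OF \<open>AP_set A\<close>] by blast
  \<comment> \<open>colour classes of values up to \<open>M\<close> are fibres of \<open>f\<close>\<close>
  have "M < v"
  proof (rule ccontr)
    assume "\<not> M < v"
    then have "A \<inter> h -` {v} = A \<inter> f -` {v}" unfolding h_def by auto
    then show False using v no_fibre by simp
  qed
  obtain a d where "0 < d" and ap: "\<forall>i<L. a + i * d \<in> A \<inter> h -` {v}"
    using v unfolding AP_set_def by blast
  define B where "B = (\<lambda>i. a + i * d) ` {..<L}"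
  have "B \<subseteq> A \<inter> h -` {v}" unfolding B_def using ap by auto
  then have "B \<subseteq> A" and "\<forall>x\<in>B. M < f x \<and> f x mod m = v - (M + 1)"
    using \<open>M < v\<close> unfolding h_def by (auto split: if_splits)
  moreover have "has_AP B L" unfolding has_AP_def B_def using \<open>0 < d\<close> by blast
  ultimately show ?thesis unfolding B_def by auto
qed

section \<open>Sparse sets are not IP-sets\<close>

definition sparse :: "nat set \<Rightarrow> bool" where
  "sparse S \<longleftrightarrow> (\<forall>b. \<exists>N. \<forall>x\<in>S. \<forall>y\<in>S. N \<le> x \<longrightarrow> x < y \<longrightarrow> x + b < y)"

lemma sparse_UN:
  assumes fin: "\<And>k. finite (S k)"
    and inner: "\<And>k x y. x \<in> S k \<Longrightarrow> y \<in> S k \<Longrightarrow> x < y \<Longrightarrow> x + k < y"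
    and outer: "\<And>j k x y. j < k \<Longrightarrow> x \<in> S j \<Longrightarrow> y \<in> S k \<Longrightarrow> x + j < y"
  shows "sparse (\<Union>k. S k)"
  unfolding sparse_def
proof
  fix b
  obtain N where N: "\<forall>x\<in>(\<Union>j<b. S j). x < N"
    using fin finite_nat_bounded[of "\<Union>j<b. S j"] by auto
  have "x + b < y" if "x \<in> S k" "y \<in> S k'" "N \<le> x" "x < y" for x y k k'
  proof -
    have "b \<le> k" using N that by (meson UN_I lessThan_iff not_le_imp_less not_less)
    consider "k' < k" | "k' = k" | "k < k'" by linarith
    then show ?thesis
    proof cases
      case 1
      then show ?thesis using outer that by fastforce
    next
      case 2
      then show ?thesis using inner that \<open>b \<le> k\<close> by fastforce
    next
      case 3
      then show ?thesis using outer that \<open>b \<le> k\<close> by fastforce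
    qed
  qed
  then show "\<exists>N. \<forall>x\<in>\<Union>k. S k. \<forall>y\<in>\<Union>k. S k. N \<le> x \<longrightarrow> x < y \<longrightarrow> x + b < y" by blast
qed

lemma FS_singleton: "x \<in> B \<Longrightarrow> x \<in> FS B"
  unfolding FS_def by (rule CollectI, rule exI[of _ "{x}"]) auto

lemma FS_pair: "x \<in> B \<Longrightarrow> y \<in> B \<Longrightarrow> x \<noteq> y \<Longrightarrow> x + y \<in> FS B"
  unfolding FS_def by (rule CollectI, rule exI[of _ "{x, y}"]) auto

lemma finite_not_IP_set: "finite S \<Longrightarrow> \<not> IP_set S"
  unfolding IP_set_def by (meson FS_singleton finite_subset subset_iff)

lemma sparse_not_IP_set:
  assumes "sparse S"
  shows "\<not> IP_set S"
proof
  assume "IP_set S"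
  then obtain B where "infinite B" and "FS B \<subseteq> S" unfolding IP_set_def by blast
  have "infinite (B - {0})" using \<open>infinite B\<close> by simp
  then obtain b where "b \<in> B" "0 < b" using infinite_imp_nonempty by blast
  obtain N where N: "\<forall>x\<in>S. \<forall>y\<in>S. N \<le> x \<longrightarrow> x < y \<longrightarrow> x + b < y"
    using \<open>sparse S\<close> unfolding sparse_def by blast
  obtain x where "x \<in> B" "N + b < x"
    using \<open>infinite B\<close> unfolding infinite_nat_iff_unbounded by blast
  then have "x \<in> S" "x + b \<in> S"
    using FS_singleton FS_pair[of x B b] \<open>b \<in> B\<close> \<open>FS B \<subseteq> S\<close> by auto
  then show False using N \<open>N + b < x\<close> \<open>0 < b\<close> by fastforce
qed

lemma sparse_enumerate_gaps:
  assumes "sparse S" and "infinite S"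
  shows "filterlim (\<lambda>n. enumerate S (Suc n) - enumerate S n) at_top sequentially"
  unfolding filterlim_at_top eventually_sequentially
proof
  fix b
  obtain N where N: "\<forall>x\<in>S. \<forall>y\<in>S. N \<le> x \<longrightarrow> x < y \<longrightarrow> x + b < y"
    using \<open>sparse S\<close> unfolding sparse_def by blast
  have "b \<le> enumerate S (Suc n) - enumerate S n" if "N \<le> n" for n
  proof -
    have "N \<le> enumerate S n" using le_enumerate[OF \<open>infinite S\<close>] that order_trans by blast
    then have "enumerate S n + b < enumerate S (Suc n)"
      using N enumerate_in_set enumerate_step \<open>infinite S\<close> by blast
    then show ?thesis by simp
  qed
  then show "\<exists>N. \<forall>n\<ge>N. b \<le> enumerate S (Suc n) - enumerate S n" by blast
qed

section \<open>An AP-subset with sparse image\<close>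

lemma separated_blocks:
  fixes f :: "nat \<Rightarrow> nat" and P :: "nat \<Rightarrow> nat set \<Rightarrow> bool"
  assumes "\<And>M k. \<exists>B. P k B \<and> finite B \<and> (\<forall>x\<in>B. M < f x)"
  obtains B where "\<And>k. P k (B k)" and "\<And>k. finite (B k)" and "\<And>k x. x \<in> B k \<Longrightarrow> k < f x"
    and "\<And>j k x y. j < k \<Longrightarrow> x \<in> B j \<Longrightarrow> y \<in> B k \<Longrightarrow> f x + j < f y"
proof -
  define blk where "blk M k = (SOME B. P k B \<and> finite B \<and> (\<forall>x\<in>B. M < f x))" for M k
  have blk: "P k (blk M k) \<and> finite (blk M k) \<and> (\<forall>x\<in>blk M k. M < f x)" for M k
    unfolding blk_def using assms by (rule someI_ex)
  define bnd where "bnd = rec_nat 0 (\<lambda>k b. b + Suc k + Max (insert 0 (f ` blk b k)))"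
  have bnd_Suc: "bnd (Suc k) = bnd k + Suc k + Max (insert 0 (f ` blk (bnd k) k))" for k
    unfolding bnd_def by simp
  have "k \<le> bnd k" for k by (induction k) (auto simp: bnd_def)
  have bnd_mono: "bnd j \<le> bnd k" if "j \<le> k" for j k
    using lift_Suc_mono_le[of bnd] bnd_Suc that by simp
  have below_next: "f x + Suc k \<le> bnd (Suc k)" if "x \<in> blk (bnd k) k" for x k
  proof -
    have "f x \<le> Max (insert 0 (f ` blk (bnd k) k))"
      using blk[where M = "bnd k" and k = k] that by (simp add: Max_ge)
    then show ?thesis unfolding bnd_Suc by simp
  qed
  show ?thesis
  proof (rule that)
    fix k
    show "P k (blk (bnd k) k)" "finite (blk (bnd k) k)" using blk by blast+
    show "k < f x" if "x \<in> blk (bnd k) k" for x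
      using blk \<open>k \<le> bnd k\<close> that by (meson le_less_trans)
  next
    fix j k x y assume "j < k" "x \<in> blk (bnd j) j" "y \<in> blk (bnd k) k"
    have "f x + Suc j \<le> bnd k"
      using below_next[OF \<open>x \<in> blk (bnd j) j\<close>] bnd_mono[of "Suc j" k] \<open>j < k\<close> by simp
    also have "bnd k < f y" using blk \<open>y \<in> blk (bnd k) k\<close> by blast
    finally show "f x + j < f y" by simp
  qed
qed

lemma AP_subset_with_sparse_image:
  fixes f :: "nat \<Rightarrow> nat"
  assumes "AP_set A" and no_fibre: "\<And>v. \<not> AP_set (A \<inter> f -` {v})"
  shows "\<exists>C\<subseteq>A. AP_set C \<and> finite_to_one_on f C \<and> infinite (f ` C) \<and> sparse (f ` C)"
proof -
  define P where "P k B \<longleftrightarrow> B \<subseteq> A \<and> has_AP B k \<and> (\<forall>x\<in>B. \<forall>y\<in>B. f x mod Suc k = f y mod Suc k)"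
    for k B
  have blocks_exist: "\<exists>B. P k B \<and> finite B \<and> (\<forall>x\<in>B. M < f x)" for M k
  proof -
    obtain B where "B \<subseteq> A" "finite B" "has_AP B k" "\<forall>x\<in>B. M < f x"
        "\<forall>x\<in>B. \<forall>y\<in>B. f x mod Suc k = f y mod Suc k"
      using AP_above_in_residue_class[OF \<open>AP_set A\<close> no_fibre, of "Suc k" k M] by auto
    then show ?thesis unfolding P_def by blast
  qed
  obtain B where B: "\<And>k. P k (B k)" "\<And>k. finite (B k)" "\<And>k x. x \<in> B k \<Longrightarrow> k < f x"
    and separated: "\<And>j k x y. j < k \<Longrightarrow> x \<in> B j \<Longrightarrow> y \<in> B k \<Longrightarrow> f x + j < f y"
    using separated_blocks[of P f, OF blocks_exist] by blast
  define C where "C = (\<Union>k. B k)"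
  have "C \<subseteq> A" using B(1) unfolding C_def P_def by blast
  moreover have "AP_set C"
    unfolding AP_set_iff_has_AP
  proof
    fix k
    have "has_AP (B k) k" using B(1) unfolding P_def by blast
    then show "has_AP C k" using has_AP_mono[of "B k" k k C] unfolding C_def by blast
  qed
  moreover have "finite_to_one_on f C"
    unfolding finite_to_one_on_def
  proof
    fix y
    have "{x \<in> C. f x = y} \<subseteq> (\<Union>k<y. B k)"
    proof
      fix x assume "x \<in> {x \<in> C. f x = y}"
      then obtain k where "x \<in> B k" "f x = y" unfolding C_def by blast
      then show "x \<in> (\<Union>k<y. B k)" using B(3)[of x k] by blast
    qed
    moreover have "finite (\<Union>k<y. B k)" using B(2) by blast
    ultimately show "finite {x \<in> C. f x = y}" by (rule finite_subset)
  qed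
  moreover have "infinite (f ` C)"
    unfolding infinite_nat_iff_unbounded
  proof
    fix m
    have "has_AP (B (Suc m)) (Suc m)" using B(1) unfolding P_def by blast
    then obtain x where "x \<in> B (Suc m)" using has_AP_nonempty by blast
    then have "m < f x" "f x \<in> f ` C" using B(3)[of x "Suc m"] unfolding C_def by auto
    then show "\<exists>n>m. n \<in> f ` C" by blast
  qed
  moreover have "sparse (f ` C)"
    unfolding C_def image_UN
  proof (rule sparse_UN)
    show "finite (f ` B k)" for k using B(2) by simp
  next
    fix k u w assume "u \<in> f ` B k" "w \<in> f ` B k" "u < w"
    then obtain x y where "x \<in> B k" "y \<in> B k" "u = f x" "w = f y" by blast
    then have "u mod Suc k = w mod Suc k" using B(1)[of k] unfolding P_def by blast
    then have "Suc k dvd w - u" using \<open>u < w\<close> mod_eq_dvd_iff_nat[of u w "Suc k"] by simp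
    then have "Suc k \<le> w - u" using \<open>u < w\<close> by (simp add: dvd_imp_le)
    then show "u + k < w" by simp
  next
    fix j k u w assume "j < k" "u \<in> f ` B j" "w \<in> f ` B k"
    then show "u + j < w" using separated by fastforce
  qed
  ultimately show ?thesis by blast
qed

theorem lemma1p1:
  fixes A :: "nat set" and f :: "nat \<Rightarrow> nat"
  assumes "AP_set A"
  shows "\<exists>C. AP_set C \<and> C \<subseteq> A \<and>
           (card (f ` C) = 1 \<or>
            (finite_to_one_on f C \<and>
             filterlim (\<lambda>n. Infinite_Set.enumerate (f ` C) (Suc n) - Infinite_Set.enumerate (f ` C) n)
                       at_top sequentially)) \<and>
           \<not> IP_set (f ` C)"
proof (cases "\<exists>v. AP_set (A \<inter> f -` {v})")
  case True
  then obtain v where fibre: "AP_set (A \<inter> f -` {v})" by blast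
  then have "has_AP (A \<inter> f -` {v}) 1" unfolding AP_set_iff_has_AP by blast
  then have "A \<inter> f -` {v} \<noteq> {}" by (rule has_AP_nonempty) simp
  then have "f ` (A \<inter> f -` {v}) = {v}" by auto
  then show ?thesis using fibre finite_not_IP_set[of "{v}"] by (intro exI[of _ "A \<inter> f -` {v}"]) auto
next
  case False
  then obtain C where "C \<subseteq> A" "AP_set C" "finite_to_one_on f C" "infinite (f ` C)" "sparse (f ` C)"
    using AP_subset_with_sparse_image[OF assms] by blast
  then show ?thesis using sparse_enumerate_gaps sparse_not_IP_set by blast
qed

end
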